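(* Let $P\ge 1$ be an integer, let $\Delta x,\Delta t>0$, and let $U^*:\mathbb{R}\to\mathbb{R}^d$ be a continuous stationary solution of the balance law $U_t+F(U)_x=S(U)H_x$, i.e. $F(U^* )_x=S(U^* )H_x$. Assume that for every node $x_i$ the solution of the Cauchy problem $F(V)_x=S(V)H_x$, $V(x_i)=U^*(x_i)$, is unique on the nodes used by the scheme, so that the local equilibrium used by the scheme at node $i$ is $U^*_i=U^*$. If the WBCAT$2P$ scheme described in the context is applied with initial data $U^0_i=U^*(x_i)$ for all $i\in\mathbb{Z}$, then $U^n_i=U^0_i$ for all $i\in\mathbb{Z}$ and all $n\ge 0$.
   Context: Setting: $U:\mathbb{R}\times[0,\infty)\to\mathbb{R}^d$, $F,S:\mathbb{R}^d\to\mathbb{R}^d$ smooth, $H:\mathbb{R}\to\mathbb{R}$ smooth and known, $H_x=H'$. Uniform grid $x_l=l\Delta x$, $l\in\mathbb{Z}$; $U^n_l$ approximates $U(x_l,n\Delta t)$. Numerical differentiation weights: for integers $k\ge 0$ and real $q$, $\gamma^{k,q}_{P,j}$ ($j=-P+1,\dots,P$) are the unique weights such that $\frac{1}{h^k}\sum_{j=-P+1}^{P}\gamma^{k,q}_{P,j} f(x_0+jh)$ equals the $k$-th derivative at $x_0+qh$ of the polynomial of degree $\le 2P-1$ interpolating $f$ at $x_0+jh$, $j=-P+1,\dots,P$ (so $k=0$ is Lagrange interpolation). Quadrature weights: for each $m$ and $j=-P+2,\dots,P$, $a^{m,j}_{P,l}$ ($l=-P+1,\dots,P$) are weights of the interpolatory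 rule $\int_{x_{m+j-1}}^{x_{m+j}} f\,dx\approx \Delta x\sum_{l=-P+1}^P a^{m,j}_{P,l} f(x_{m+l})$ with nodes $x_{m+l}$. WBCAT$2P$ scheme. Given $U^n$, for each $i$ let $U^*_i$ be the stationary solution with $U^*_i(x_i)=U^n_i$. For each $m\in\{i-1,i\}$ compute, with indices $j,s,l,r\in\{-P+1,\dots,P\}$: (0) $F^{(0)}_{j}=F(U^n_{m+j})-F(U^*_i(x_{m+j}))$; for $j=-P+2,\dots,P$, $\tilde I^{(0)}_{j-1,j}=\Delta x\sum_l a^{m,j}_{P,l}\big(S(U^n_{m+l})-S(U^*_i(x_{m+l}))\big)H_x(x_{m+l})$; and $\tilde I^{(0)}_{-P+1,j}=\sum_{s=-P+2}^{j}\tilde I^{(0)}_{s-1,s}$ (which is $0$ for $j=-P+1$). (1) For $k=1,\dots,2P-1$: $U^{(k)}_j=-\frac{1}{\Delta x}\sum_s\gamma^{1,j}_{P,s}F^{(k-1)}_s+\frac{1}{\Delta x}\sum_s\gamma^{1,j}_{P,s}\tilde I^{(k-1)}_{-P+1,s}$; $U^{k,r}_j=U^n_{m+j}+\sum_{q=1}^{k}\frac{(r\Delta t)^q}{q!}U^{(q)}_j$; $F^{(k)}_j=\frac{1}{\Delta t^k}\sum_r\gamma^{k,0}_{P,r}F(U^{k,r}_j)$; for $j=-P+2,\dots,P$, $\tilde I^{(k)}_{j-1,j}=\frac{1}{\Delta t^k}\sum_r\gamma^{k,0}_{P,r}\,\Delta x\sum_l a^{m,j}_{P,l}S(U^{k,r}_l)H_x(x_{m+l})$;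 and $\tilde I^{(k)}_{-P+1,j}=\sum_{s=-P+2}^{j}\tilde I^{(k)}_{s-1,s}$. (2) Flux: $F_{i;m+1/2}=\sum_{k=1}^{2P}\frac{\Delta t^{k-1}}{k!}\sum_j\gamma^{0,1/2}_{P,j}F^{(k-1)}_j$ (quantities computed with this $m$). (3) Source: for $k=1,\dots,2P$ let $\tilde{\mathcal I}^{(k-1)}_j$ be $\tilde I^{(k-1)}_{j,j+1}$ computed with $m=i-1$ if $j\le 0$, and $\tilde I^{(k-1)}_{j-1,j}$ computed with $m=i$ if $j\ge1$; set $\tilde S_i=\sum_{k=1}^{2P}\frac{\Delta t^{k-1}}{k!}\sum_j\gamma^{0,1/2}_{P,j}\tilde{\mathcal I}^{(k-1)}_j$. (4) Update: $U^{n+1}_i=U^n_i+\frac{\Delta t}{\Delta x}\big(F_{i;i-1/2}-F_{i;i+1/2}+\tilde S_i\big)$. *)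

theory Defs
  imports "HOL-Analysis.Analysis" "HOL-Computational_Algebra.Polynomial"
begin

definition stencil :: "nat \<Rightarrow> int set" where
  "stencil P = {- int P + 1 .. int P}"

definition node :: "real \<Rightarrow> int \<Rightarrow> real" where
  "node dx l = real_of_int l * dx"

text \<open>Lagrange basis polynomial (in the normalised variable s = (x - x0)/h) for the
  nodes -P+1,...,P, attached to node j.  The interpolant of f is
  sum_j f(x0+jh) L_j((x-x0)/h).\<close>
definition lagrange_basis :: "nat \<Rightarrow> int \<Rightarrow> real poly" where
  "lagrange_basis P j =
     (\<Prod>m\<in>stencil P - {j}. [: - of_int m / of_int (j - m), 1 / of_int (j - m) :])"

text \<open>gamma^{k,q}_{P,j}: the k-th derivative at x0+qh of the interpolant equals
  h^{-k} sum_j gamma_j f(x0+jh).\<close>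
definition gamma :: "nat \<Rightarrow> nat \<Rightarrow> real \<Rightarrow> int \<Rightarrow> real" where
  "gamma P k q j = poly ((pderiv ^^ k) (lagrange_basis P j)) q"

text \<open>a^{m,j}_{P,l}: weights of the interpolatory rule on [x_{m+j-1}, x_{m+j}] with
  nodes x_{m+l}; they do not depend on m.\<close>
definition qweight :: "nat \<Rightarrow> int \<Rightarrow> int \<Rightarrow> real" where
  "qweight P j l = integral {real_of_int j - 1 .. real_of_int j} (\<lambda>s. poly (lagrange_basis P l) s)"

definition is_stationary ::
  "(real^'d \<Rightarrow> real^'d) \<Rightarrow> (real^'d \<Rightarrow> real^'d) \<Rightarrow> (real \<Rightarrow> real) \<Rightarrow> (real \<Rightarrow> real^'d) \<Rightarrow> bool" where
  "is_stationary F S H V \<longleftrightarrow> continuous_on UNIV V \<and>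
     (\<forall>y. ((\<lambda>z. F (V z)) has_vector_derivative (deriv H y *\<^sub>R S (V y))) (at y))"

definition local_eq ::
  "(real^'d \<Rightarrow> real^'d) \<Rightarrow> (real^'d \<Rightarrow> real^'d) \<Rightarrow> (real \<Rightarrow> real) \<Rightarrow> real \<Rightarrow> real^'d \<Rightarrow> (real \<Rightarrow> real^'d)" where
  "local_eq F S H xi v = (SOME V. is_stationary F S H V \<and> V xi = v)"

text \<open>A level of the recursion: (F^{(k)}_j, I~^{(k)}_{j-1,j}) as functions of j.\<close>
type_synonym 'd level = "(int \<Rightarrow> real^'d) \<times> (int \<Rightarrow> real^'d)"

text \<open>I~^{(k)}_{-P+1,j} from the pieces I~^{(k)}_{s-1,s}.\<close>
definition cumI :: "nat \<Rightarrow> (int \<Rightarrow> real^'d) \<Rightarrow> int \<Rightarrow> real^'d" where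
  "cumI P I j = (\<Sum>s\<in>{- int P + 2 .. j}. I s)"

text \<open>U^{(q)}_j, computed from level q-1.\<close>
definition Uder :: "nat \<Rightarrow> real \<Rightarrow> 'd level \<Rightarrow> int \<Rightarrow> real^'d" where
  "Uder P dx L j =
     - ((1 / dx) *\<^sub>R (\<Sum>s\<in>stencil P. gamma P 1 (of_int j) s *\<^sub>R fst L s))
     + (1 / dx) *\<^sub>R (\<Sum>s\<in>stencil P. gamma P 1 (of_int j) s *\<^sub>R cumI P (snd L) s)"

definition level0 ::
  "(real^'d \<Rightarrow> real^'d) \<Rightarrow> (real^'d \<Rightarrow> real^'d) \<Rightarrow> (real \<Rightarrow> real) \<Rightarrow> nat \<Rightarrow> real \<Rightarrow>
   (int \<Rightarrow> real^'d) \<Rightarrow> (real \<Rightarrow> real^'d) \<Rightarrow> int \<Rightarrow> 'd level" where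
  "level0 F S H P dx Uc W m =
     ((\<lambda>j. F (Uc (m + j)) - F (W (node dx (m + j)))),
      (\<lambda>j. dx *\<^sub>R (\<Sum>l\<in>stencil P. (qweight P j l * deriv H (node dx (m + l))) *\<^sub>R
                     (S (Uc (m + l)) - S (W (node dx (m + l)))))))"

text \<open>Given the list L = [level 0, ..., level (k-1)], compute level k (k = length L \<ge> 1).\<close>
definition level_next ::
  "(real^'d \<Rightarrow> real^'d) \<Rightarrow> (real^'d \<Rightarrow> real^'d) \<Rightarrow> (real \<Rightarrow> real) \<Rightarrow> nat \<Rightarrow> real \<Rightarrow> real \<Rightarrow>
   (int \<Rightarrow> real^'d) \<Rightarrow> int \<Rightarrow> 'd level list \<Rightarrow> 'd level" where
  "level_next F S H P dx dt Uc m L =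
     (let k = length L;
          Ukr = (\<lambda>r j. Uc (m + j) +
                   (\<Sum>q\<in>{1..k}. (((of_int r * dt) ^ q) / fact q) *\<^sub>R Uder P dx (L ! (q - 1)) j))
      in ((\<lambda>j. (1 / dt ^ k) *\<^sub>R (\<Sum>r\<in>stencil P. gamma P k 0 r *\<^sub>R F (Ukr r j))),
          (\<lambda>j. (1 / dt ^ k) *\<^sub>R (\<Sum>r\<in>stencil P. gamma P k 0 r *\<^sub>R
                 (dx *\<^sub>R (\<Sum>l\<in>stencil P. (qweight P j l * deriv H (node dx (m + l))) *\<^sub>R
                                         S (Ukr r l)))))))"

primrec levels ::
  "(real^'d \<Rightarrow> real^'d) \<Rightarrow> (real^'d \<Rightarrow> real^'d) \<Rightarrow> (real \<Rightarrow> real) \<Rightarrow> nat \<Rightarrow> real \<Rightarrow> real \<Rightarrow>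
   (int \<Rightarrow> real^'d) \<Rightarrow> (real \<Rightarrow> real^'d) \<Rightarrow> int \<Rightarrow> nat \<Rightarrow> 'd level list" where
  "levels F S H P dx dt Uc W m 0 = [level0 F S H P dx Uc W m]"
| "levels F S H P dx dt Uc W m (Suc k) =
     (let L = levels F S H P dx dt Uc W m k in L @ [level_next F S H P dx dt Uc m L])"

definition level ::
  "(real^'d \<Rightarrow> real^'d) \<Rightarrow> (real^'d \<Rightarrow> real^'d) \<Rightarrow> (real \<Rightarrow> real) \<Rightarrow> nat \<Rightarrow> real \<Rightarrow> real \<Rightarrow>
   (int \<Rightarrow> real^'d) \<Rightarrow> (real \<Rightarrow> real^'d) \<Rightarrow> int \<Rightarrow> nat \<Rightarrow> 'd level" where
  "level F S H P dx dt Uc W m k = levels F S H P dx dt Uc W m k ! k"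

text \<open>Numerical flux F_{i;m+1/2}, with W = U*_i.\<close>
definition num_flux ::
  "(real^'d \<Rightarrow> real^'d) \<Rightarrow> (real^'d \<Rightarrow> real^'d) \<Rightarrow> (real \<Rightarrow> real) \<Rightarrow> nat \<Rightarrow> real \<Rightarrow> real \<Rightarrow>
   (int \<Rightarrow> real^'d) \<Rightarrow> (real \<Rightarrow> real^'d) \<Rightarrow> int \<Rightarrow> real^'d" where
  "num_flux F S H P dx dt Uc W m =
     (\<Sum>k\<in>{1..2*P}. (dt ^ (k - 1) / fact k) *\<^sub>R
        (\<Sum>j\<in>stencil P. gamma P 0 (1/2) j *\<^sub>R fst (level F S H P dx dt Uc W m (k - 1)) j))"

definition num_source ::
  "(real^'d \<Rightarrow> real^'d) \<Rightarrow> (real^'d \<Rightarrow> real^'d) \<Rightarrow> (real \<Rightarrow> real) \<Rightarrow> nat \<Rightarrow> real \<Rightarrow> real \<Rightarrow>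
   (int \<Rightarrow> real^'d) \<Rightarrow> (real \<Rightarrow> real^'d) \<Rightarrow> int \<Rightarrow> real^'d" where
  "num_source F S H P dx dt Uc W i =
     (\<Sum>k\<in>{1..2*P}. (dt ^ (k - 1) / fact k) *\<^sub>R
        (\<Sum>j\<in>stencil P. gamma P 0 (1/2) j *\<^sub>R
           (if j \<le> 0 then snd (level F S H P dx dt Uc W (i - 1) (k - 1)) (j + 1)
            else snd (level F S H P dx dt Uc W i (k - 1)) j)))"

definition wbcat_step ::
  "(real^'d \<Rightarrow> real^'d) \<Rightarrow> (real^'d \<Rightarrow> real^'d) \<Rightarrow> (real \<Rightarrow> real) \<Rightarrow> nat \<Rightarrow> real \<Rightarrow> real \<Rightarrow>
   (int \<Rightarrow> real^'d) \<Rightarrow> int \<Rightarrow> real^'d" where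
  "wbcat_step F S H P dx dt Uc i =
     (let W = local_eq F S H (node dx i) (Uc i)
      in Uc i + (dt / dx) *\<^sub>R
           (num_flux F S H P dx dt Uc W (i - 1) - num_flux F S H P dx dt Uc W i
            + num_source F S H P dx dt Uc W i))"

end

theory Submission
  imports Defs
begin

text \<open>At the initial data every local equilibrium coincides with the data on the whole stencil,
  so all level-0 differences vanish there. The Lagrange basis is a partition of unity, hence the
  differentiation weights of order k \<ge> 1 sum to zero; consequently each higher level is a
  zero-sum combination of values that do not depend on the time node r, and vanishes as well.\<close>

lemma finite_stencil [simp]: "finite (stencil P)"
  by (simp add: stencil_def)

lemma card_stencil: "card (stencil P) = 2 * P"
  by (simp add: stencil_def)

lemma poly_lagrange_basis:
  "poly (lagrange_basis P j) x = (\<Prod>m\<in>stencil P - {j}. (x - of_int m) / of_int (j - m))"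
  unfolding lagrange_basis_def poly_prod by (intro prod.cong refl) (simp add: diff_divide_distrib)

lemma poly_lagrange_basis_node:
  assumes "j \<in> stencil P" "t \<in> stencil P"
  shows "poly (lagrange_basis P j) (of_int t) = (if t = j then 1 else 0)"
proof (cases "t = j")
  case False
  with assms have "t \<in> stencil P - {j}" by auto
  then have "(\<Prod>m\<in>stencil P - {j}. (of_int t - of_int m) / of_int (j - m) :: real) = 0"
    by (intro prod_zero) auto
  with False show ?thesis by (simp add: poly_lagrange_basis)
qed (simp add: poly_lagrange_basis)

lemma degree_lagrange_basis_le:
  assumes "j \<in> stencil P"
  shows "degree (lagrange_basis P j) \<le> 2 * P - 1"
proof -
  have "degree (lagrange_basis P j) \<le> (\<Sum>m\<in>stencil P - {j}. 1)"
    unfolding lagrange_basis_def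
    by (rule order.trans[OF degree_prod_sum_le]) (auto intro!: sum_mono)
  also have "\<dots> = 2 * P - 1"
    using assms by (simp add: card_Diff_singleton_if card_stencil)
  finally show ?thesis .
qed

lemma sum_lagrange_basis:
  assumes "P \<ge> 1"
  shows "(\<Sum>j\<in>stencil P. lagrange_basis P j) = 1"
proof -
  have card_nodes: "card (of_int ` stencil P :: real set) = 2 * P"
    by (subst card_image) (auto simp: inj_on_def card_stencil)
  have "degree (\<Sum>j\<in>stencil P. lagrange_basis P j) \<le> 2 * P - 1"
    by (rule degree_sum_le) (use degree_lagrange_basis_le in auto)
  then show ?thesis
  proof (intro poly_eqI_degree[where A = "of_int ` stencil P"])
    fix x :: real
    assume "x \<in> of_int ` stencil P"
    then obtain t where t: "t \<in> stencil P" "x = of_int t" by auto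
    then have "poly (\<Sum>j\<in>stencil P. lagrange_basis P j) x = (\<Sum>j\<in>stencil P. if t = j then 1 else 0)"
      unfolding poly_sum by (intro sum.cong) (auto simp: poly_lagrange_basis_node)
    with t show "poly (\<Sum>j\<in>stencil P. lagrange_basis P j) x = poly 1 x" by simp
  qed (use card_nodes assms in auto)
qed

lemma sum_gamma_eq_0:
  assumes "P \<ge> 1" "k \<ge> 1"
  shows "(\<Sum>r\<in>stencil P. gamma P k q r) = 0"
proof -
  obtain k' where k: "k = Suc k'" using assms(2) by (cases k) auto
  have "(\<Sum>r\<in>stencil P. gamma P k q r) = poly ((pderiv ^^ k) (\<Sum>j\<in>stencil P. lagrange_basis P j)) q"
    by (simp add: gamma_def higher_pderiv_sum poly_sum)
  also have "\<dots> = 0"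
    by (simp add: sum_lagrange_basis[OF assms(1)] k funpow_Suc_right del: funpow.simps)
  finally show ?thesis .
qed

text \<open>Only the entries on the stencil matter: the scheme never reads a level elsewhere.\<close>
definition level_vanishes :: "nat \<Rightarrow> ('d::finite) level \<Rightarrow> bool" where
  "level_vanishes P L \<longleftrightarrow> (\<forall>j\<in>stencil P. fst L j = 0 \<and> snd L j = 0)"

lemma Uder_eq_0:
  assumes "level_vanishes P L"
  shows "Uder P dx L j = 0"
proof -
  have "cumI P (snd L) s = 0" if "s \<in> stencil P" for s
    using assms that unfolding cumI_def level_vanishes_def
    by (intro sum.neutral) (auto simp: stencil_def)
  with assms show ?thesis
    unfolding Uder_def level_vanishes_def by simp
qed

lemma level_next_vanishes:
  assumes "P \<ge> 1" "L \<noteq> []" "\<forall>M\<in>set L. level_vanishes P M"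
  shows "level_vanishes P (level_next F S H P dx dt Uc m L)"
proof -
  have "length L \<ge> 1" using assms(2) by (cases L) auto
  then have zero_sum: "(\<Sum>r\<in>stencil P. gamma P (length L) 0 r *\<^sub>R v) = 0" for v :: "real^'d"
    by (simp add: scaleR_sum_left[symmetric] sum_gamma_eq_0[OF assms(1)])
  have "Uder P dx (L ! (q - 1)) j = 0" if "q \<in> {1..length L}" for q j
    using that assms(3) by (intro Uder_eq_0) auto
  then have no_update: "(\<Sum>q\<in>{1..length L}. c q *\<^sub>R Uder P dx (L ! (q - 1)) j) = 0" for c j
    by (intro sum.neutral ballI) simp
  show ?thesis
    unfolding level_vanishes_def level_next_def Let_def
    by (simp only: no_update add_0_right zero_sum scaleR_zero_right) simp
qed

lemma length_levels: "length (levels F S H P dx dt Uc W m k) = Suc k"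
  by (induction k) (simp_all add: Let_def)

lemma levels_vanish:
  assumes "P \<ge> 1" "level_vanishes P (level0 F S H P dx Uc W m)"
  shows "\<forall>M\<in>set (levels F S H P dx dt Uc W m k). level_vanishes P M"
proof (induction k)
  case (Suc k)
  have "levels F S H P dx dt Uc W m k \<noteq> []"
    using length_levels[of F S H P dx dt Uc W m k] by auto
  with Suc show ?case by (simp add: Let_def level_next_vanishes[OF assms(1)])
qed (use assms in simp)

lemma level_vanishes:
  assumes "P \<ge> 1" "level_vanishes P (level0 F S H P dx Uc W m)"
  shows "level_vanishes P (level F S H P dx dt Uc W m k)"
  using levels_vanish[OF assms, of dt k] length_levels[of F S H P dx dt Uc W m k]
  unfolding level_def by (metis lessI nth_mem)

lemma level0_vanishes:
  assumes "\<forall>j\<in>stencil P. W (node dx (m + j)) = Uc (m + j)"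
  shows "level_vanishes P (level0 F S H P dx Uc W m)"
  using assms unfolding level_vanishes_def level0_def by simp

lemma num_flux_eq_0:
  assumes "P \<ge> 1" "\<forall>j\<in>stencil P. W (node dx (m + j)) = Uc (m + j)"
  shows "num_flux F S H P dx dt Uc W m = 0"
  using level_vanishes[OF assms(1) level0_vanishes[OF assms(2)]]
  unfolding num_flux_def level_vanishes_def by simp

lemma num_source_eq_0:
  assumes "P \<ge> 1"
    and "\<forall>j\<in>stencil P. W (node dx (i - 1 + j)) = Uc (i - 1 + j)"
    and "\<forall>j\<in>stencil P. W (node dx (i + j)) = Uc (i + j)"
  shows "num_source F S H P dx dt Uc W i = 0"
proof -
  note left = level_vanishes[OF assms(1) level0_vanishes[OF assms(2)]]
  note right = level_vanishes[OF assms(1) level0_vanishes[OF assms(3)]]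
  have "j + 1 \<in> stencil P" if "j \<in> stencil P" "j \<le> 0" for j
    using that assms(1) by (auto simp: stencil_def)
  with left right show ?thesis
    unfolding num_source_def level_vanishes_def
    by (auto intro!: sum.neutral split: if_splits)
qed

lemma wbcat_step_fixed:
  assumes "P \<ge> 1"
    and agree: "\<forall>l\<in>{- int P .. int P}. local_eq F S H (node dx i) (Uc i) (node dx (i + l)) = Uc (i + l)"
  shows "wbcat_step F S H P dx dt Uc i = Uc i"
proof -
  define W where "W = local_eq F S H (node dx i) (Uc i)"
  have left: "\<forall>j\<in>stencil P. W (node dx (i - 1 + j)) = Uc (i - 1 + j)"
  proof
    fix j
    assume "j \<in> stencil P"
    then have "j - 1 \<in> {- int P .. int P}" by (auto simp: stencil_def)
    with agree show "W (node dx (i - 1 + j)) = Uc (i - 1 + j)"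
      unfolding W_def by (metis add.commute add_diff_eq diff_add_eq)
  qed
  have right: "\<forall>j\<in>stencil P. W (node dx (i + j)) = Uc (i + j)"
    using agree unfolding W_def by (auto simp: stencil_def)
  show ?thesis
    unfolding wbcat_step_def Let_def W_def[symmetric]
    by (simp add: num_flux_eq_0[OF assms(1)] num_source_eq_0[OF assms(1)] left right)
qed

lemma local_eq_stationary:
  assumes "is_stationary F S H V" "V xi = v"
  shows "is_stationary F S H (local_eq F S H xi v) \<and> local_eq F S H xi v xi = v"
  unfolding local_eq_def by (rule someI[of _ V]) (use assms in simp)

theorem mainTheorem1:
  fixes F S :: "real^'d \<Rightarrow> real^'d" and H :: "real \<Rightarrow> real"
    and P :: nat and dx dt :: real and Ustar :: "real \<Rightarrow> real^'d"
  assumes "P \<ge> 1" and "dx > 0" and "dt > 0"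
    and "\<forall>x. H differentiable (at x)"
    and "is_stationary F S H Ustar"
    and "\<forall>i V. is_stationary F S H V \<and> V (node dx i) = Ustar (node dx i) \<longrightarrow>
            (\<forall>l\<in>{- int P .. int P}. V (node dx (i + l)) = Ustar (node dx (i + l)))"
  shows "\<forall>n i. ((wbcat_step F S H P dx dt ^^ n) (\<lambda>i. Ustar (node dx i))) i = Ustar (node dx i)"
proof -
  define U0 where "U0 = (\<lambda>i. Ustar (node dx i))"
  have "wbcat_step F S H P dx dt U0 = U0"
  proof
    fix i
    have "\<forall>l\<in>{- int P .. int P}. local_eq F S H (node dx i) (U0 i) (node dx (i + l)) = U0 (i + l)"
      using assms(6) local_eq_stationary[OF assms(5), of "node dx i"] unfolding U0_def by blast
    then show "wbcat_step F S H P dx dt U0 i = U0 i"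
      by (rule wbcat_step_fixed[OF assms(1)])
  qed
  then have "(wbcat_step F S H P dx dt ^^ n) U0 = U0" for n
    by (induction n) simp_all
  then show ?thesis unfolding U0_def by simp
qed

end
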